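(* Let $(S,d)$ be a metric space and let $P$ be a non-empty subset of $S$ with the induced metric. If $f\in\mathrm{BL}(P)$ and $c\in\mathbb{R}$ are such that $|f\vee c\mathbf{1}|_L=|f|_L$, then $$\mathcal{E}^{S,0}_P(f\vee c\mathbf{1})\vee c\mathbf{1}=\mathcal{E}^{S,0}_P(f)\vee c\mathbf{1}.$$
   Context: $\mathrm{BL}(P)$ is the space of bounded real-valued Lipschitz functions on $P$, $|f|_L=\sup_{x\neq y}|f(x)-f(y)|/d(x,y)$ (with $|f|_L=0$ on a singleton), $\vee$ is pointwise maximum, and $c\mathbf{1}$ denotes the constant function $c$ (on $P$ or on $S$ as appropriate). For $f\in\mathrm{BL}(P)$, $\mathcal{E}^{S,0}_P f(x)=\sup_{p\in P}[f(p)-|f|_L d(p,x)]$ for $x\in S$. *)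

theory Defs
  imports "HOL-Analysis.Analysis"
begin

definition lip_const :: "'a::metric_space set \<Rightarrow> ('a \<Rightarrow> real) \<Rightarrow> real" where
  "lip_const P f =
     (if \<exists>x\<in>P. \<exists>y\<in>P. x \<noteq> y
      then (SUP p \<in> {(x, y). x \<in> P \<and> y \<in> P \<and> x \<noteq> y}. \<bar>f (fst p) - f (snd p)\<bar> / dist (fst p) (snd p))
      else 0)"

definition BL :: "'a::metric_space set \<Rightarrow> ('a \<Rightarrow> real) set" where
  "BL P = {f. bounded (f ` P) \<and> (\<exists>L. L \<ge> 0 \<and> L-lipschitz_on P f)}"

definition ext0 :: "'a::metric_space set \<Rightarrow> ('a \<Rightarrow> real) \<Rightarrow> 'a \<Rightarrow> real" where
  "ext0 P f x = (SUP p \<in> P. f p - lip_const P f * dist p x)"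

end

theory Submission
  imports Defs
begin

text \<open>Both extensions are suprema of downward cones \<open>p \<mapsto> g p - L d(p, x)\<close> with the same slope
  \<open>L = |f|\<^sub>L\<close>, by hypothesis. Raising the tips of the cones of \<open>f\<close> to height at least \<open>c\<close> can only add cones whose
  value is at most \<open>c\<close>, so after truncating below at \<open>c\<close> both suprema agree.\<close>

text \<open>The Lipschitz bound is needed: \<open>Sup\<close> of a set of reals that is not bounded above is junk.\<close>

lemma lip_const_nonneg:
  assumes "K-lipschitz_on P f"
  shows "0 \<le> lip_const P f"
proof (cases "\<exists>x\<in>P. \<exists>y\<in>P. x \<noteq> y")
  case True
  then obtain x y where xy: "x \<in> P" "y \<in> P" "x \<noteq> y" by blast
  let ?A = "{(x, y). x \<in> P \<and> y \<in> P \<and> x \<noteq> y}"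
  let ?q = "\<lambda>p. \<bar>f (fst p) - f (snd p)\<bar> / dist (fst p) (snd p)"
  have bdd: "bdd_above (?q ` ?A)"
  proof (rule bdd_aboveI2)
    fix p assume "p \<in> ?A"
    then have "dist (f (fst p)) (f (snd p)) \<le> K * dist (fst p) (snd p)" "dist (fst p) (snd p) > 0"
      using assms by (auto simp: lipschitz_on_def)
    then show "?q p \<le> K"
      by (simp add: dist_real_def divide_le_eq)
  qed
  have "0 \<le> ?q (x, y)" by simp
  also have "\<dots> \<le> (SUP p \<in> ?A. ?q p)"
    by (rule cSUP_upper[OF _ bdd]) (use xy in auto)
  finally show ?thesis using True unfolding lip_const_def by simp
qed (simp add: lip_const_def)

lemma max_SUP_max_const_minus:
  fixes f w :: "'a \<Rightarrow> real"
  assumes "P \<noteq> {}" and "bdd_above (f ` P)" and "\<And>p. p \<in> P \<Longrightarrow> 0 \<le> w p"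
  shows "max (SUP p \<in> P. max (f p) c - w p) c = max (SUP p \<in> P. f p - w p) c"
proof -
  from assms(2) obtain B where B: "\<And>p. p \<in> P \<Longrightarrow> f p \<le> B"
    by (auto simp: bdd_above_def)
  have bdd_f: "bdd_above ((\<lambda>p. f p - w p) ` P)"
    by (rule bdd_aboveI2[where M = B]) (use B assms(3) in force)
  have bdd_g: "bdd_above ((\<lambda>p. max (f p) c - w p) ` P)"
    by (rule bdd_aboveI2[where M = "max B c"]) (use B assms(3) in force)
  have "(SUP p \<in> P. max (f p) c - w p) \<le> max (SUP p \<in> P. f p - w p) c"
  proof (rule cSUP_least[OF assms(1)])
    fix p assume "p \<in> P"
    then have "f p - w p \<le> (SUP p \<in> P. f p - w p)" "0 \<le> w p"
      using cSUP_upper[OF _ bdd_f] assms(3) by auto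
    then show "max (f p) c - w p \<le> max (SUP p \<in> P. f p - w p) c" by linarith
  qed
  moreover have "(SUP p \<in> P. f p - w p) \<le> (SUP p \<in> P. max (f p) c - w p)"
    by (rule cSUP_mono[OF assms(1) bdd_g]) (auto intro: max.cobounded1 diff_right_mono)
  ultimately show ?thesis by linarith
qed

theorem corollary4p5:
  fixes P :: "'a::metric_space set" and f :: "'a \<Rightarrow> real" and c :: real
  assumes "P \<noteq> {}"
    and "f \<in> BL P"
    and "lip_const P (\<lambda>p. max (f p) c) = lip_const P f"
  shows "(\<lambda>x. max (ext0 P (\<lambda>p. max (f p) c) x) c) = (\<lambda>x. max (ext0 P f x) c)"
proof
  fix x
  from assms(2) obtain K where "bounded (f ` P)" "K-lipschitz_on P f"
    unfolding BL_def by blast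
  then have "bdd_above (f ` P)" and "0 \<le> lip_const P f"
    by (simp_all add: bounded_imp_bdd_above lip_const_nonneg)
  then show "max (ext0 P (\<lambda>p. max (f p) c) x) c = max (ext0 P f x) c"
    unfolding ext0_def assms(3)
    by (intro max_SUP_max_const_minus[OF assms(1)]) auto
qed

end
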